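(* Let $f=f_0+f_1i+f_2j+f_3k\colon M\to\mathbb H$ be a minimal surface with conjugate $f^*=f_0^*+f_1^*i+f_2^*j+f_3^*k$, and let $\sigma=e^{s+\mathbf i t}\in\mathfrak C_*$. Then, up to translation, the López–Ros deformation of $f$ is $$f^\sigma=\begin{pmatrix}f_0\\ \cos t\,(f_1\cosh s-f_2^*\sinh s)-\sin t\,(f_2\cosh s+f_1^*\sinh s)\\ \sin t\,(f_1\cosh s-f_2^*\sinh s)+\cos t\,(f_2\cosh s+f_1^*\sinh s)\\ f_3\end{pmatrix}.$$ Moreover, if $|\sigma|\neq1$, then $f^\sigma$ is the simple factor dressing of $f$ with parameters $(\mu,m,m)$ where $\mu=\frac{1-e^{-(s+it)}}{1-e^{s-it}}\in\mathbb C\setminus\{0,1\}$ and $m=\frac{1-i-j-k}2$.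
   Context: Quaternions $\mathbb H$, basis $1,i,j,k$, $\mathbb C=\operatorname{span}_{\mathbb R}\{1,i\}\subset\mathbb H$; $\mathfrak C=\mathbb R\oplus\mathbf i\mathbb R$ with complex unit $\mathbf i$ distinct from $i$, $\mathfrak C_*=\mathfrak C\setminus\{0\}$. Conjugate surface: $df^*=-*df$, $*\omega(X)=\omega(JX)$; $\Phi=f+\mathbf i f^*=(\Phi_0,\Phi_1,\Phi_2,\Phi_3)$. Weierstrass data: $\omega=d\Phi_1-\mathbf i\,d\Phi_2$, $g_1=d\Phi_3/\omega$, $g_2=d\Phi_0/\omega$. The López–Ros deformation with parameter $\sigma$ is $\operatorname{Re}\int\big(\tilde g_2\tilde\omega,\tfrac12(1-\tilde g_1^2-\tilde g_2^2)\tilde\omega,\tfrac{\mathbf i}2(1+\tilde g_1^2+\tilde g_2^2)\tilde\omega,\tilde g_1\tilde\omega\big)$ with $(\tilde g_1,\tilde g_2,\tilde\omega)=(\sigma g_1,\sigma g_2,\omega/\sigma)$. Simple factor dressing: for $\mu\in\mathbb C\setminus\{0,1\}$, $a=\frac{\mu+\mu^{-1}}2$, $b=i\frac{\mu^{-1}-\mu}2$, $m,n\in\mathbb H_*$: $\hat f=-f\frac{m(a-1)m^{-1}}2+f^*\frac{mbm^{-1}}2-n\frac{b}{a-1}n^{-1}\big(f\frac{mbm^{-1}}2+f^*\frac{m(a-1)m^{-1}}2\big)$. *)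

theory Defs
  imports "HOL-Analysis.Analysis"
begin

text \<open>A quaternion q = q0 + q1 i + q2 j + q3 k is represented by the vector
  with components q $ 0, q $ 1, q $ 2, q $ 3 (index type 4 = {0,1,2,3}).\<close>

type_synonym quat = "real ^ 4"

definition Quat :: "real \<Rightarrow> real \<Rightarrow> real \<Rightarrow> real \<Rightarrow> quat" where
  "Quat a b c d = (\<chi> n. if n = 0 then a else if n = 1 then b else if n = 2 then c else d)"

definition qmul :: "quat \<Rightarrow> quat \<Rightarrow> quat" where
  "qmul p q = Quat
     (p$0 * q$0 - p$1 * q$1 - p$2 * q$2 - p$3 * q$3)
     (p$0 * q$1 + p$1 * q$0 + p$2 * q$3 - p$3 * q$2)
     (p$0 * q$2 - p$1 * q$3 + p$2 * q$0 + p$3 * q$1)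
     (p$0 * q$3 + p$1 * q$2 - p$2 * q$1 + p$3 * q$0)"

definition qconj :: "quat \<Rightarrow> quat" where
  "qconj q = Quat (q$0) (- q$1) (- q$2) (- q$3)"

definition qinv :: "quat \<Rightarrow> quat" where
  "qinv q = (1 / (norm q)\<^sup>2) *\<^sub>R qconj q"

text \<open>The quaternion unit 1 (note: the numeral 1 in real^4 is (1,1,1,1), not this).\<close>
definition qone :: quat where "qone = Quat 1 0 0 0"

definition cq :: "complex \<Rightarrow> quat" where
  "cq z = Quat (Re z) (Im z) 0 0"

text \<open>Local coordinate z on U \<subseteq> C; the complex structure J of M is multiplication by
  the complex unit on tangent vectors h :: complex.\<close>

definition conformal_immersion_on :: "complex set \<Rightarrow> (complex \<Rightarrow> quat) \<Rightarrow> bool" where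
  "conformal_immersion_on U f \<longleftrightarrow> (\<exists>Df. \<forall>z\<in>U.
      (f has_derivative Df z) (at z) \<and> Df z 1 \<noteq> 0 \<and>
      Df z 1 \<bullet> Df z 1 = Df z \<i> \<bullet> Df z \<i> \<and> Df z 1 \<bullet> Df z \<i> = 0)"

definition harmonic_on :: "complex set \<Rightarrow> (complex \<Rightarrow> quat) \<Rightarrow> bool" where
  "harmonic_on U f \<longleftrightarrow> (\<exists>Df D2f. \<forall>z\<in>U.
      (f has_derivative Df z) (at z) \<and>
      (\<forall>h. ((\<lambda>w. Df w h) has_derivative D2f z h) (at z)) \<and>
      D2f z 1 1 + D2f z \<i> \<i> = 0)"

text \<open>A minimal surface: a conformal immersion with vanishing mean curvature,
  equivalently (for conformal immersions) a harmonic conformal immersion.\<close>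
definition minimal_surface_on :: "complex set \<Rightarrow> (complex \<Rightarrow> quat) \<Rightarrow> bool" where
  "minimal_surface_on U f \<longleftrightarrow> conformal_immersion_on U f \<and> harmonic_on U f"

definition conjugate_surface_on :: "complex set \<Rightarrow> (complex \<Rightarrow> quat) \<Rightarrow> (complex \<Rightarrow> quat) \<Rightarrow> bool" where
  "conjugate_surface_on U f fs \<longleftrightarrow> (\<exists>Df Dfs. \<forall>z\<in>U.
      (f has_derivative Df z) (at z) \<and> (fs has_derivative Dfs z) (at z) \<and>
      (\<forall>h. Dfs z h = - Df z (\<i> * h)))"

text \<open>Phi = f + \<i> f*, component k (values in the complex numbers with unit \<i>,
  distinct from the quaternion i).\<close>
definition Phi :: "(complex \<Rightarrow> quat) \<Rightarrow> (complex \<Rightarrow> quat) \<Rightarrow> 4 \<Rightarrow> complex \<Rightarrow> complex" where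
  "Phi f fs k z = Complex (f z $ k) (fs z $ k)"

definition dPhi :: "(complex \<Rightarrow> quat) \<Rightarrow> (complex \<Rightarrow> quat) \<Rightarrow> 4 \<Rightarrow> complex \<Rightarrow> complex" where
  "dPhi f fs k z = deriv (Phi f fs k) z"

definition W_omega :: "(complex \<Rightarrow> quat) \<Rightarrow> (complex \<Rightarrow> quat) \<Rightarrow> complex \<Rightarrow> complex" where
  "W_omega f fs z = dPhi f fs 1 z - \<i> * dPhi f fs 2 z"

definition W_g1 :: "(complex \<Rightarrow> quat) \<Rightarrow> (complex \<Rightarrow> quat) \<Rightarrow> complex \<Rightarrow> complex" where
  "W_g1 f fs z = dPhi f fs 3 z / W_omega f fs z"

definition W_g2 :: "(complex \<Rightarrow> quat) \<Rightarrow> (complex \<Rightarrow> quat) \<Rightarrow> complex \<Rightarrow> complex" where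
  "W_g2 f fs z = dPhi f fs 0 z / W_omega f fs z"

definition LR_forms :: "(complex \<Rightarrow> quat) \<Rightarrow> (complex \<Rightarrow> quat) \<Rightarrow> complex \<Rightarrow> complex \<Rightarrow> complex list" where
  "LR_forms f fs \<sigma> z =
    (let g1 = \<sigma> * W_g1 f fs z; g2 = \<sigma> * W_g2 f fs z; w = W_omega f fs z / \<sigma> in
     [g2 * w,
      (1 - g1\<^sup>2 - g2\<^sup>2) / 2 * w,
      \<i> / 2 * (1 + g1\<^sup>2 + g2\<^sup>2) * w,
      g1 * w])"

text \<open>F is (a representative of) the Lopez--Ros deformation F = Re \<integral>(...):
  F is continuous on U and its differential equals the real part of the
  deformed forms wherever the Weierstrass data is defined (\<omega> \<noteq> 0).\<close>
definition lopez_ros_deformation ::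
  "complex set \<Rightarrow> (complex \<Rightarrow> quat) \<Rightarrow> (complex \<Rightarrow> quat) \<Rightarrow> complex \<Rightarrow> (complex \<Rightarrow> quat) \<Rightarrow> bool" where
  "lopez_ros_deformation U f fs \<sigma> F \<longleftrightarrow> continuous_on U F \<and>
     (\<forall>z\<in>U. W_omega f fs z \<noteq> 0 \<longrightarrow>
        (F has_derivative (\<lambda>h. let A = LR_forms f fs \<sigma> z in
            Quat (Re (A!0 * h)) (Re (A!1 * h)) (Re (A!2 * h)) (Re (A!3 * h)))) (at z))"

definition qconjby :: "quat \<Rightarrow> quat \<Rightarrow> quat" where
  "qconjby m x = qmul (qmul m x) (qinv m)"

definition simple_factor_dressing ::
  "complex \<Rightarrow> quat \<Rightarrow> quat \<Rightarrow> (complex \<Rightarrow> quat) \<Rightarrow> (complex \<Rightarrow> quat) \<Rightarrow> complex \<Rightarrow> quat" where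
  "simple_factor_dressing \<mu> m n f fs z =
    (let a = cq ((\<mu> + inverse \<mu>) / 2);
         b = qmul (cq \<i>) (cq ((inverse \<mu> - \<mu>) / 2));
         am1 = a - qone in
     - qmul (f z) ((1/2) *\<^sub>R qconjby m am1)
     + qmul (fs z) ((1/2) *\<^sub>R qconjby m b)
     - qmul (qconjby n (qmul b (qinv am1)))
         (qmul (f z) ((1/2) *\<^sub>R qconjby m b) + qmul (fs z) ((1/2) *\<^sub>R qconjby m am1)))"

end

theory Submission
  imports Defs "HOL-Complex_Analysis.Complex_Analysis"
begin

text \<open>Conformality of \<open>f\<close> says that \<open>\<Phi>' = (f + \<i> f*)'\<close> is isotropic,
  \<open>\<Sum>\<^sub>k \<Phi>\<^sub>k'\<^sup>2 = 0\<close>, so \<open>g\<^sub>1\<^sup>2 + g\<^sub>2\<^sup>2 = - (\<Phi>\<^sub>1' + \<i> \<Phi>\<^sub>2') / \<omega>\<close> and the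
  Lopez--Ros forms become linear in \<open>\<Phi>'\<close>: for \<open>\<sigma> = exp (s + \<i> t)\<close> they fix \<open>\<Phi>\<^sub>0'\<close>
  and \<open>\<Phi>\<^sub>3'\<close> and rotate \<open>(\<Phi>\<^sub>1', \<Phi>\<^sub>2')\<close> by the complex angle \<open>t - \<i> s\<close>. Hence \<open>f\<^sup>\<sigma>\<close>
  and the real part of the correspondingly rotated \<open>\<Phi>\<close> have the same differential away
  from the zeros of the holomorphic function \<open>\<omega>\<close>. These zeros are isolated, so the
  difference is locally constant, hence constant on the connected domain.

  For the dressing, conjugation by \<open>m = (1 - i - j - k)/2\<close> carries \<open>span {1, i}\<close> onto
  \<open>span {1, k}\<close>. With the given \<open>\<mu>\<close> one computes
  \<open>a - 1 = - sinh\<^sup>2 s / (cosh s - cos t) \<cdot> exp (- \<i> t)\<close> and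
  \<open>b (a - 1)\<^sup>-\<^sup>1 = (sin t + \<i> (cosh s - cos t)) / sinh s\<close>, after which the dressing formula
  is the rotated real part by a polynomial identity.\<close>

section \<open>Quaternion arithmetic\<close>

lemma Quat_nth [simp]:
  "Quat a b c d $ 0 = a" "Quat a b c d $ 1 = b" "Quat a b c d $ 2 = c" "Quat a b c d $ 3 = d"
  by (simp_all add: Quat_def)

lemma quat_eq_iff: "(x::quat) = y \<longleftrightarrow> x$0 = y$0 \<and> x$1 = y$1 \<and> x$2 = y$2 \<and> x$3 = y$3"
proof -
  \<comment> \<open>\<open>forall_4\<close> enumerates the index type \<open>4\<close> as \<open>1, 2, 3, 4\<close>\<close>
  have "(4::4) = 0" by simp
  then show ?thesis unfolding vec_eq_iff forall_4 by metis
qed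

lemma inner_quat: "(x::quat) \<bullet> y = x$0 * y$0 + x$1 * y$1 + x$2 * y$2 + x$3 * y$3"
proof -
  have "(4::4) = 0" by simp
  then show ?thesis unfolding inner_vec_def sum_4 by (simp only:) (simp add: ac_simps)
qed

lemma norm_quat_sq: "(norm (x::quat))\<^sup>2 = x$0^2 + x$1^2 + x$2^2 + x$3^2"
  unfolding power2_norm_eq_inner inner_quat by (simp add: power2_eq_square)

lemma Quat_basis:
  "Quat a b c d = a *\<^sub>R Quat 1 0 0 0 + b *\<^sub>R Quat 0 1 0 0 + c *\<^sub>R Quat 0 0 1 0 + d *\<^sub>R Quat 0 0 0 1"
  by (simp add: quat_eq_iff)

lemma has_derivative_Quat:
  assumes "(a has_derivative a') F" "(b has_derivative b') F"
    and "(c has_derivative c') F" "(d has_derivative d') F"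
  shows "((\<lambda>x. Quat (a x) (b x) (c x) (d x)) has_derivative (\<lambda>h. Quat (a' h) (b' h) (c' h) (d' h))) F"
  unfolding Quat_basis[of "a _"] Quat_basis[of "a' _"]
  by (intro has_derivative_add has_derivative_scaleR_left assms)

section \<open>The Lopez--Ros deformation as a complex rotation\<close>

lemma cosh_Complex: "cosh (Complex s t) = Complex (cosh s * cos t) (sinh s * sin t)"
  by (simp add: cosh_def sinh_def exp_eq_polar cis.code complex_eq_iff exp_minus field_simps)

lemma sinh_Complex: "sinh (Complex s t) = Complex (sinh s * cos t) (cosh s * sin t)"
  by (simp add: cosh_def sinh_def exp_eq_polar cis.code complex_eq_iff exp_minus field_simps)

text \<open>With \<open>p = f\<close> and \<open>q = f*\<close>, \<open>Complex (p$k) (q$k)\<close> is \<open>\<Phi>\<^sub>k\<close>; the matrix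
  \<open>((cosh \<zeta>, \<i> sinh \<zeta>), (- \<i> sinh \<zeta>, cosh \<zeta>))\<close> is the rotation by the angle \<open>- \<i> \<zeta>\<close>.\<close>

definition lopez_ros_map :: "complex \<Rightarrow> quat \<Rightarrow> quat \<Rightarrow> quat" where
  "lopez_ros_map \<zeta> p q = Quat (p$0)
     (Re (cosh \<zeta> * Complex (p$1) (q$1) + \<i> * sinh \<zeta> * Complex (p$2) (q$2)))
     (Re (cosh \<zeta> * Complex (p$2) (q$2) - \<i> * sinh \<zeta> * Complex (p$1) (q$1)))
     (p$3)"

lemma lopez_ros_map_Complex:
  "lopez_ros_map (Complex s t) p q = Quat (p$0)
     (cos t * (p$1 * cosh s - q$2 * sinh s) - sin t * (p$2 * cosh s + q$1 * sinh s))
     (sin t * (p$1 * cosh s - q$2 * sinh s) + cos t * (p$2 * cosh s + q$1 * sinh s))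
     (p$3)"
  by (simp add: lopez_ros_map_def cosh_Complex sinh_Complex quat_eq_iff algebra_simps)

lemma has_derivative_lopez_ros_map:
  assumes "(f has_derivative f') F" "(g has_derivative g') F"
  shows "((\<lambda>x. lopez_ros_map \<zeta> (f x) (g x)) has_derivative (\<lambda>h. lopez_ros_map \<zeta> (f' h) (g' h))) F"
proof -
  have "lopez_ros_map \<zeta> p q = Quat (p$0)
      (Re (cosh \<zeta>) * p$1 - Im (cosh \<zeta>) * q$1 - Im (sinh \<zeta>) * p$2 - Re (sinh \<zeta>) * q$2)
      (Re (cosh \<zeta>) * p$2 - Im (cosh \<zeta>) * q$2 + Im (sinh \<zeta>) * p$1 + Re (sinh \<zeta>) * q$1)
      (p$3)" for p q
    by (simp add: lopez_ros_map_def algebra_simps)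
  then show ?thesis
    by (simp only:) (intro has_derivative_Quat derivative_intros
        bounded_linear.has_derivative[OF bounded_linear_vec_nth] assms)
qed

lemma Complex_linear_eq_mult:
  fixes L :: "complex \<Rightarrow> real"
  assumes "linear L"
  shows "Complex (L h) (- L (\<i> * h)) = Complex (L 1) (- L \<i>) * h"
proof -
  have decomp: "L w = Re w * L 1 + Im w * L \<i>" for w
  proof -
    have "w = Re w *\<^sub>R 1 + Im w *\<^sub>R \<i>" by (simp add: complex_eq_iff)
    then have "L w = L (Re w *\<^sub>R 1 + Im w *\<^sub>R \<i>)" by (rule arg_cong)
    then show ?thesis using assms by (simp add: linear_add linear_scale)
  qed
  show ?thesis
    using decomp[of h] decomp[of "\<i> * h"] by (simp add: complex_eq_iff algebra_simps)
qed

lemma Phi_has_field_derivative: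
  fixes f fs :: "complex \<Rightarrow> quat"
  assumes df: "(f has_derivative Df) (at z)" and dfs: "(fs has_derivative (\<lambda>h. - Df (\<i> * h))) (at z)"
  shows "(Phi f fs k has_field_derivative Complex (Df 1 $ k) (- (Df \<i> $ k))) (at z)"
proof -
  have Phi_eq: "Phi f fs k = (\<lambda>z. of_real (f z $ k) + \<i> * of_real (fs z $ k))"
    by (simp add: Phi_def Complex_eq fun_eq_iff)
  have "((\<lambda>z. of_real (f z $ k) + \<i> * of_real (fs z $ k)) has_derivative
      (\<lambda>h. of_real (Df h $ k) + \<i> * of_real ((- Df (\<i> * h)) $ k))) (at z)"
    by (intro has_derivative_add has_derivative_mult_right has_derivative_of_real
        bounded_linear.has_derivative[OF bounded_linear_vec_nth] df dfs)
  moreover have "linear (\<lambda>h. Df h $ k)"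
    using bounded_linear.has_derivative[OF bounded_linear_vec_nth df] by (rule has_derivative_linear)
  then have "Complex (Df h $ k) (- (Df (\<i> * h) $ k)) = Complex (Df 1 $ k) (- (Df \<i> $ k)) * h" for h
    by (rule Complex_linear_eq_mult)
  then have "(\<lambda>h. of_real (Df h $ k) + \<i> * of_real ((- Df (\<i> * h)) $ k))
      = (*) (Complex (Df 1 $ k) (- (Df \<i> $ k)))"
    by (simp add: fun_eq_iff Complex_eq)
  ultimately show ?thesis
    unfolding has_field_derivative_def Phi_eq by simp
qed

lemma isotropic_of_conformal:
  fixes a b :: quat
  assumes "a \<bullet> a = b \<bullet> b" and "a \<bullet> b = 0"
  shows "(Complex (a$0) (- b$0))\<^sup>2 + (Complex (a$1) (- b$1))\<^sup>2
       + (Complex (a$2) (- b$2))\<^sup>2 + (Complex (a$3) (- b$3))\<^sup>2 = 0"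
  using assms by (simp add: inner_quat complex_eq_iff power2_eq_square algebra_simps)

lemma LR_forms_exp_isotropic:
  fixes f fs :: "complex \<Rightarrow> quat" and z \<zeta> :: complex
  defines "\<phi> \<equiv> \<lambda>k. dPhi f fs k z"
  assumes iso: "(\<phi> 0)\<^sup>2 + (\<phi> 1)\<^sup>2 + (\<phi> 2)\<^sup>2 + (\<phi> 3)\<^sup>2 = 0"
    and \<omega>: "W_omega f fs z \<noteq> 0"
  shows "LR_forms f fs (exp \<zeta>) z = [\<phi> 0, cosh \<zeta> * \<phi> 1 + \<i> * sinh \<zeta> * \<phi> 2,
      cosh \<zeta> * \<phi> 2 - \<i> * sinh \<zeta> * \<phi> 1, \<phi> 3]"
proof -
  define \<sigma> where "\<sigma> = exp \<zeta>"
  define \<omega> where "\<omega> = \<phi> 1 - \<i> * \<phi> 2"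
  have \<sigma>0: "\<sigma> \<noteq> 0" by (simp add: \<sigma>_def)
  have \<omega>0: "\<omega> \<noteq> 0" using \<omega> by (simp add: W_omega_def \<omega>_def \<phi>_def)
  have "(\<phi> 3)\<^sup>2 + (\<phi> 0)\<^sup>2 + \<omega> * (\<phi> 1 + \<i> * \<phi> 2) = (\<phi> 0)\<^sup>2 + (\<phi> 1)\<^sup>2 + (\<phi> 2)\<^sup>2 + (\<phi> 3)\<^sup>2"
    by (simp add: \<omega>_def algebra_simps power2_eq_square)
  then have isotropy: "(\<phi> 3)\<^sup>2 + (\<phi> 0)\<^sup>2 = - (\<omega> * (\<phi> 1 + \<i> * \<phi> 2))"
    unfolding eq_neg_iff_add_eq_0 using iso by simp
  have "(\<sigma> * (\<phi> 3 / \<omega>))\<^sup>2 + (\<sigma> * (\<phi> 0 / \<omega>))\<^sup>2 = \<sigma>\<^sup>2 / \<omega>\<^sup>2 * ((\<phi> 3)\<^sup>2 + (\<phi> 0)\<^sup>2)"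
    by (simp add: power_mult_distrib power_divide distrib_left)
  also have "\<dots> = - \<sigma>\<^sup>2 * (\<phi> 1 + \<i> * \<phi> 2) / \<omega>"
    unfolding isotropy using \<omega>0 by (simp add: power2_eq_square)
  finally have g_sq: "(\<sigma> * (\<phi> 3 / \<omega>))\<^sup>2 + (\<sigma> * (\<phi> 0 / \<omega>))\<^sup>2 = - \<sigma>\<^sup>2 * (\<phi> 1 + \<i> * \<phi> 2) / \<omega>" .
  have cosh: "cosh \<zeta> = (\<sigma> + inverse \<sigma>) / 2" and sinh: "sinh \<zeta> = (\<sigma> - inverse \<sigma>) / 2"
    by (simp_all add: \<sigma>_def cosh_field_def sinh_field_def exp_minus)
  have "(1 - (\<sigma> * (\<phi> 3 / \<omega>))\<^sup>2 - (\<sigma> * (\<phi> 0 / \<omega>))\<^sup>2) / 2 * (\<omega> / \<sigma>)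
      = cosh \<zeta> * \<phi> 1 + \<i> * sinh \<zeta> * \<phi> 2"
    unfolding diff_diff_eq g_sq cosh sinh using \<omega>0 \<sigma>0
    by (simp add: field_simps) (simp add: \<omega>_def algebra_simps power2_eq_square)
  moreover have "\<i> / 2 * (1 + (\<sigma> * (\<phi> 3 / \<omega>))\<^sup>2 + (\<sigma> * (\<phi> 0 / \<omega>))\<^sup>2) * (\<omega> / \<sigma>)
      = cosh \<zeta> * \<phi> 2 - \<i> * sinh \<zeta> * \<phi> 1"
    unfolding add.assoc g_sq cosh sinh using \<omega>0 \<sigma>0
    by (simp add: field_simps) (simp add: \<omega>_def algebra_simps power2_eq_square)
  moreover have "dPhi f fs k z = \<phi> k" for k by (simp add: \<phi>_def)
  ultimately show ?thesis
    unfolding LR_forms_def W_g1_def W_g2_def W_omega_def Let_def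
    by (simp add: \<omega>_def[symmetric] \<sigma>_def[symmetric] \<sigma>0 \<omega>0)
qed

lemma lopez_ros_differential:
  fixes f fs Df :: "complex \<Rightarrow> quat"
  assumes df: "(f has_derivative Df) (at z)" and dfs: "(fs has_derivative (\<lambda>h. - Df (\<i> * h))) (at z)"
    and conformal: "Df 1 \<bullet> Df 1 = Df \<i> \<bullet> Df \<i>" "Df 1 \<bullet> Df \<i> = 0"
    and \<omega>: "W_omega f fs z \<noteq> 0"
  shows "(let A = LR_forms f fs (exp \<zeta>) z in
            Quat (Re (A!0 * h)) (Re (A!1 * h)) (Re (A!2 * h)) (Re (A!3 * h)))
       = lopez_ros_map \<zeta> (Df h) (- Df (\<i> * h))"
proof -
  define \<phi> where "\<phi> k = Complex (Df 1 $ k) (- (Df \<i> $ k))" for k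
  have "dPhi f fs k z = \<phi> k" for k
    unfolding dPhi_def \<phi>_def by (rule DERIV_imp_deriv[OF Phi_has_field_derivative[OF df dfs]])
  then have LR: "LR_forms f fs (exp \<zeta>) z = [\<phi> 0, cosh \<zeta> * \<phi> 1 + \<i> * sinh \<zeta> * \<phi> 2,
      cosh \<zeta> * \<phi> 2 - \<i> * sinh \<zeta> * \<phi> 1, \<phi> 3]"
    using LR_forms_exp_isotropic[OF _ \<omega>] isotropic_of_conformal[OF conformal] by (simp add: \<phi>_def)
  have "linear (\<lambda>h. Df h $ k)" for k
    using bounded_linear.has_derivative[OF bounded_linear_vec_nth df] by (rule has_derivative_linear)
  then have \<phi>h: "Complex (Df h $ k) ((- Df (\<i> * h)) $ k) = \<phi> k * h" for k
    unfolding \<phi>_def vector_uminus_component by (rule Complex_linear_eq_mult)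
  have Re_\<phi>h: "Df h $ k = Re (\<phi> k * h)" for k
    using arg_cong[OF \<phi>h, of Re] by simp
  show ?thesis
    unfolding LR Let_def lopez_ros_map_def \<phi>h unfolding Re_\<phi>h by (simp add: algebra_simps)
qed

section \<open>Constancy away from the zeros of \<open>\<omega>\<close>\<close>

lemma has_derivative_zero_eventually_constant_on:
  fixes G :: "'a::euclidean_space \<Rightarrow> 'b::banach"
  assumes "connected S" "open S" "continuous_on S G"
    and deriv0: "\<And>a. a \<in> S \<Longrightarrow> \<forall>\<^sub>F x in at a. (G has_derivative (\<lambda>h. 0)) (at x)"
  shows "G constant_on S"
proof (rule locally_constant_imp_constant[OF \<open>connected S\<close>])
  fix a assume "a \<in> S"
  have "\<forall>\<^sub>F x in at a. x \<in> S \<and> (G has_derivative (\<lambda>h. 0)) (at x)"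
    using eventually_at_in_open'[OF \<open>open S\<close> \<open>a \<in> S\<close>] deriv0[OF \<open>a \<in> S\<close>]
    by (rule eventually_conj)
  then obtain r where "r > 0" and r: "\<And>x. x \<in> ball a r - {a} \<Longrightarrow> x \<in> S \<and> (G has_derivative (\<lambda>h. 0)) (at x)"
    unfolding eventually_at by (auto simp: dist_commute)
  have "ball a r \<subseteq> S"
    using r \<open>a \<in> S\<close> by blast
  have "G constant_on ball a r"
  proof (rule has_derivative_zero_connected_constant_on[where K = "{a}"])
    show "continuous_on (ball a r) G"
      using \<open>continuous_on S G\<close> \<open>ball a r \<subseteq> S\<close> by (rule continuous_on_subset)
    show "\<forall>x\<in>ball a r - {a}. (G has_derivative (\<lambda>h. 0)) (at x within ball a r)"
      using r has_derivative_at_withinI by blast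
  qed auto
  then show "\<exists>T. openin (top_of_set S) T \<and> a \<in> T \<and> (\<forall>x\<in>T. G x = G a)"
    using \<open>ball a r \<subseteq> S\<close> \<open>r > 0\<close> unfolding constant_on_def
    by (metis centre_in_ball open_ball open_subset)
qed

lemma holomorphic_eventually_nonzero:
  assumes holf: "f holomorphic_on S" and S: "open S" "connected S"
    and "a \<in> S" "b \<in> S" "f b \<noteq> 0"
  shows "\<forall>\<^sub>F z in at a. f z \<noteq> 0"
proof (cases "f a = 0")
  case True
  obtain r where "0 < r" "ball a r \<subseteq> S" and r: "\<And>z. z \<in> ball a r - {a} \<Longrightarrow> f z \<noteq> 0"
    using isolated_zeros[OF holf S \<open>a \<in> S\<close> True \<open>b \<in> S\<close> \<open>f b \<noteq> 0\<close>] by metis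
  from eventually_at_ball'[OF \<open>0 < r\<close>] show ?thesis
    by eventually_elim (simp add: r)
next
  case False
  have "f analytic_on {a}"
    using holf analytic_on_subset[of f S "{a}"] \<open>a \<in> S\<close> by (simp add: analytic_on_open S)
  then show ?thesis using False by (rule analytic_at_neq_imp_eventually_neq)
qed

lemma W_omega_holomorphic_on:
  fixes f fs :: "complex \<Rightarrow> quat"
  assumes "open U"
    and df: "\<And>z. z \<in> U \<Longrightarrow> (f has_derivative Df z) (at z)"
    and dfs: "\<And>z. z \<in> U \<Longrightarrow> (fs has_derivative (\<lambda>h. - Df z (\<i> * h))) (at z)"
  shows "W_omega f fs holomorphic_on U"
proof -
  have hol: "Phi f fs k holomorphic_on U" for k
    unfolding holomorphic_on_open[OF \<open>open U\<close>] using Phi_has_field_derivative[OF df dfs] by blast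
  have "W_omega f fs = (\<lambda>z. deriv (Phi f fs 1) z - \<i> * deriv (Phi f fs 2) z)"
    by (simp add: fun_eq_iff W_omega_def dPhi_def)
  then show ?thesis
    by (simp only:) (intro holomorphic_intros holomorphic_deriv hol \<open>open U\<close>)
qed

lemma minimal_conjugate_differential:
  assumes "minimal_surface_on U f" and "conjugate_surface_on U f fs"
  obtains Df where "\<And>z. z \<in> U \<Longrightarrow> (f has_derivative Df z) (at z)"
    and "\<And>z. z \<in> U \<Longrightarrow> (fs has_derivative (\<lambda>h. - Df z (\<i> * h))) (at z)"
    and "\<And>z. z \<in> U \<Longrightarrow> Df z 1 \<bullet> Df z 1 = Df z \<i> \<bullet> Df z \<i>"
    and "\<And>z. z \<in> U \<Longrightarrow> Df z 1 \<bullet> Df z \<i> = 0"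
proof -
  obtain Df Dfs where D: "\<forall>z\<in>U. (f has_derivative Df z) (at z) \<and> (fs has_derivative Dfs z) (at z)
      \<and> (\<forall>h. Dfs z h = - Df z (\<i> * h))"
    using assms(2) unfolding conjugate_surface_on_def by blast
  obtain Df' where C: "\<forall>z\<in>U. (f has_derivative Df' z) (at z) \<and> Df' z 1 \<noteq> 0
      \<and> Df' z 1 \<bullet> Df' z 1 = Df' z \<i> \<bullet> Df' z \<i> \<and> Df' z 1 \<bullet> Df' z \<i> = 0"
    using assms(1) unfolding minimal_surface_on_def conformal_immersion_on_def by blast
  show thesis
  proof (rule that)
    fix z assume "z \<in> U"
    then have D': "(f has_derivative Df z) (at z)" "(fs has_derivative Dfs z) (at z)"
        "Dfs z = (\<lambda>h. - Df z (\<i> * h))"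
      and C': "(f has_derivative Df' z) (at z)"
        "Df' z 1 \<bullet> Df' z 1 = Df' z \<i> \<bullet> Df' z \<i>" "Df' z 1 \<bullet> Df' z \<i> = 0"
      using C D by auto
    have "Df' z = Df z" using C'(1) D'(1) by (rule has_derivative_unique)
    then show "(f has_derivative Df z) (at z)" "(fs has_derivative (\<lambda>h. - Df z (\<i> * h))) (at z)"
        "Df z 1 \<bullet> Df z 1 = Df z \<i> \<bullet> Df z \<i>" "Df z 1 \<bullet> Df z \<i> = 0"
      using C' D' by simp_all
  qed
qed

lemma lopez_ros_deformation_has_derivative:
  fixes f fs F Df :: "complex \<Rightarrow> quat"
  assumes "lopez_ros_deformation U f fs (exp \<zeta>) F" "z \<in> U" "W_omega f fs z \<noteq> 0"
    and "(f has_derivative Df) (at z)" "(fs has_derivative (\<lambda>h. - Df (\<i> * h))) (at z)"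
    and "Df 1 \<bullet> Df 1 = Df \<i> \<bullet> Df \<i>" "Df 1 \<bullet> Df \<i> = 0"
  shows "(F has_derivative (\<lambda>h. lopez_ros_map \<zeta> (Df h) (- Df (\<i> * h)))) (at z)"
proof -
  have "(F has_derivative (\<lambda>h. let A = LR_forms f fs (exp \<zeta>) z in
      Quat (Re (A!0 * h)) (Re (A!1 * h)) (Re (A!2 * h)) (Re (A!3 * h)))) (at z)"
    using assms(1-3) unfolding lopez_ros_deformation_def by blast
  then show ?thesis
    unfolding lopez_ros_differential[OF assms(4-7,3)] .
qed

lemma lopez_ros_deformation_eq_map:
  fixes U :: "complex set" and f fs F :: "complex \<Rightarrow> quat"
  assumes U: "open U" "connected U"
    and "minimal_surface_on U f" "conjugate_surface_on U f fs"
    and "\<exists>z\<in>U. W_omega f fs z \<noteq> 0"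
    and LR: "lopez_ros_deformation U f fs (exp \<zeta>) F"
  shows "\<exists>c. \<forall>z\<in>U. F z = lopez_ros_map \<zeta> (f z) (fs z) + c"
proof -
  obtain Df where df: "\<And>z. z \<in> U \<Longrightarrow> (f has_derivative Df z) (at z)"
    and dfs: "\<And>z. z \<in> U \<Longrightarrow> (fs has_derivative (\<lambda>h. - Df z (\<i> * h))) (at z)"
    and conformal: "\<And>z. z \<in> U \<Longrightarrow> Df z 1 \<bullet> Df z 1 = Df z \<i> \<bullet> Df z \<i>"
      "\<And>z. z \<in> U \<Longrightarrow> Df z 1 \<bullet> Df z \<i> = 0"
    using minimal_conjugate_differential assms(3,4) by metis
  define G where "G = (\<lambda>z. F z - lopez_ros_map \<zeta> (f z) (fs z))"
  have dmap: "((\<lambda>z. lopez_ros_map \<zeta> (f z) (fs z)) has_derivative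
      (\<lambda>h. lopez_ros_map \<zeta> (Df z h) (- Df z (\<i> * h)))) (at z)" if "z \<in> U" for z
    using df[OF that] dfs[OF that] by (rule has_derivative_lopez_ros_map)
  have "continuous_on U (\<lambda>z. lopez_ros_map \<zeta> (f z) (fs z))"
    using dmap has_derivative_continuous by (blast intro: continuous_at_imp_continuous_on)
  then have "continuous_on U G"
    using LR unfolding G_def lopez_ros_deformation_def by (intro continuous_on_diff) simp_all
  have dG: "(G has_derivative (\<lambda>h. 0)) (at z)" if "z \<in> U" and "W_omega f fs z \<noteq> 0" for z
    using has_derivative_diff[OF lopez_ros_deformation_has_derivative[OF LR that
          df[OF \<open>z \<in> U\<close>] dfs[OF \<open>z \<in> U\<close>] conformal(1,2)[OF \<open>z \<in> U\<close>]] dmap[OF \<open>z \<in> U\<close>]]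
    by (simp add: G_def)
  have holW: "W_omega f fs holomorphic_on U"
    using \<open>open U\<close> df dfs by (rule W_omega_holomorphic_on)
  obtain b where "b \<in> U" "W_omega f fs b \<noteq> 0" using assms(5) by blast
  have G_deriv_eventually_0: "\<forall>\<^sub>F x in at a. (G has_derivative (\<lambda>h. 0)) (at x)" if "a \<in> U" for a
    using eventually_at_in_open'[OF \<open>open U\<close> that]
      holomorphic_eventually_nonzero[OF holW U that \<open>b \<in> U\<close> \<open>W_omega f fs b \<noteq> 0\<close>]
    by eventually_elim (rule dG)
  have "G constant_on U"
    using \<open>connected U\<close> \<open>open U\<close> \<open>continuous_on U G\<close> G_deriv_eventually_0
    by (rule has_derivative_zero_eventually_constant_on)
  then obtain c where "\<And>z. z \<in> U \<Longrightarrow> G z = c"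
    unfolding constant_on_def by blast
  then show ?thesis
    unfolding G_def by (metis diff_eq_eq add.commute)
qed

section \<open>Simple factor dressing\<close>

lemma cq_mult: "qmul (cq z) (cq w) = cq (z * w)"
  by (simp add: qmul_def cq_def quat_eq_iff)

lemma qinv_cq: "qinv (cq z) = cq (inverse z)"
  by (simp add: qinv_def cq_def qconj_def norm_quat_sq quat_eq_iff Re_divide Im_divide cmod_def)

definition ck :: "complex \<Rightarrow> quat" where
  "ck z = Quat (Re z) 0 0 (Im z)"

lemma qconjby_cq: "qconjby (Quat (1/2) (-1/2) (-1/2) (-1/2)) (cq z) = ck z"
  by (simp add: qconjby_def qinv_def qconj_def norm_quat_sq qmul_def cq_def ck_def quat_eq_iff)
    (simp add: field_simps power2_eq_square)

lemma dressing_parameter_rational: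
  fixes e z :: complex
  assumes e0: "e \<noteq> 0" and z0: "z \<noteq> 0" and "e \<noteq> z" "e * z \<noteq> 1" and ee: "e * e \<noteq> 1"
  defines "\<mu> \<equiv> (e * z - 1) / (e * (z - e))"
  shows "(\<mu> + inverse \<mu>) / 2 - 1 = - (e * e - 1)\<^sup>2 / (2 * e * (e - z) * (e * z - 1))"
    and "\<i> * ((inverse \<mu> - \<mu>) / 2) / ((\<mu> + inverse \<mu>) / 2 - 1)
       = \<i> * (e * (e - z) - (e * z - 1)) / (e * e - 1)"
proof -
  define p where "p = e - z"
  define q where "q = e * z - 1"
  have p0: "p \<noteq> 0" and q0: "q \<noteq> 0" using \<open>e \<noteq> z\<close> \<open>e * z \<noteq> 1\<close> by (auto simp: p_def q_def)
  have \<mu>_pq: "\<mu> = - q / (e * p)"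
    using e0 \<open>e \<noteq> z\<close> unfolding \<mu>_def p_def q_def by (simp add: field_simps)
  have "\<mu> - 1 = (- q - e * p) / (e * p)"
    using e0 p0 by (simp add: \<mu>_pq field_simps)
  also have "- q - e * p = 1 - e * e"
    by (simp add: p_def q_def algebra_simps)
  finally have \<mu>_1: "\<mu> - 1 = (1 - e * e) / (e * p)" .
  have "(\<mu> + inverse \<mu>) / 2 - 1 = (\<mu> - 1)\<^sup>2 / (2 * \<mu>)"
    using e0 p0 q0 by (simp add: \<mu>_pq field_simps power2_eq_square)
  also have "\<dots> = - (e * e - 1)\<^sup>2 / (2 * e * p * q)"
    unfolding \<mu>_1 unfolding \<mu>_pq using e0 p0 q0
    by (simp add: field_simps) (simp add: power2_eq_square algebra_simps)
  finally have A: "(\<mu> + inverse \<mu>) / 2 - 1 = - (e * e - 1)\<^sup>2 / (2 * e * p * q)" .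
  then show "(\<mu> + inverse \<mu>) / 2 - 1 = - (e * e - 1)\<^sup>2 / (2 * e * (e - z) * (e * z - 1))"
    by (simp add: p_def q_def)
  have "q\<^sup>2 - (e * p)\<^sup>2 = (q - e * p) * (q + e * p)"
    by (simp add: power2_eq_square algebra_simps)
  also have "q + e * p = e * e - 1"
    by (simp add: p_def q_def algebra_simps)
  finally have diff_sq: "q\<^sup>2 - (e * p)\<^sup>2 = (q - e * p) * (e * e - 1)" .
  have "\<i> * ((inverse \<mu> - \<mu>) / 2) = \<i> * (q\<^sup>2 - (e * p)\<^sup>2) / (2 * e * p * q)"
    unfolding \<mu>_pq using e0 p0 q0 by (simp add: field_simps power2_eq_square)
  also have "\<dots> / (- (e * e - 1)\<^sup>2 / (2 * e * p * q)) = \<i> * (e * p - q) / (e * e - 1)"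
    unfolding diff_sq using e0 p0 q0 ee
    by (simp add: field_simps) (simp add: power2_eq_square algebra_simps)
  finally show "\<i> * ((inverse \<mu> - \<mu>) / 2) / ((\<mu> + inverse \<mu>) / 2 - 1)
      = \<i> * (e * (e - z) - (e * z - 1)) / (e * e - 1)"
    unfolding A p_def q_def .
qed

lemma lopez_ros_mu_closed_form:
  fixes s t :: real
  assumes "s \<noteq> 0"
  defines "\<mu> \<equiv> (1 - exp (- Complex s t)) / (1 - exp (Complex s (- t)))"
  shows "\<mu> \<noteq> 0" and "\<mu> \<noteq> 1"
    and "(\<mu> + inverse \<mu>) / 2 - 1 = - of_real (sinh s ^ 2 / (cosh s - cos t)) * Complex (cos t) (- sin t)"
    and "\<i> * ((inverse \<mu> - \<mu>) / 2) / ((\<mu> + inverse \<mu>) / 2 - 1)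
       = Complex (sin t / sinh s) ((cosh s - cos t) / sinh s)"
proof -
  define e where "e = complex_of_real (exp s)"
  define z where "z = cis t"
  have "norm e \<noteq> 1" using \<open>s \<noteq> 0\<close> by (simp add: e_def)
  moreover have "norm z = 1" by (simp add: z_def)
  ultimately have z0: "z \<noteq> 0" and ez: "e * z \<noteq> 1" and e_z: "e \<noteq> z"
    by (auto simp: norm_mult dest: arg_cong[of _ _ norm])
  have e0: "e \<noteq> 0" by (simp add: e_def)
  have ee: "e * e \<noteq> 1"
    using \<open>norm e \<noteq> 1\<close> by (auto simp: square_eq_1_iff)
  have "exp (Complex s t) = e * z" and "exp (Complex s (- t)) = e / z"
    by (simp_all add: e_def z_def exp_eq_polar divide_inverse)
  then have \<mu>: "\<mu> = (e * z - 1) / (e * (z - e))"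
    using e0 z0 ez e_z unfolding \<mu>_def exp_minus by (simp add: field_simps)
  show "\<mu> \<noteq> 0" using e0 ez e_z by (simp add: \<mu>)
  show "\<mu> \<noteq> 1" using e0 e_z ee by (simp add: \<mu> field_simps)
  have ch: "complex_of_real (cosh s) = (e + inverse e) / 2"
    by (simp add: e_def cosh_def exp_minus)
  have sh: "complex_of_real (sinh s) = (e * e - 1) / (2 * e)"
    using e0 by (simp add: e_def sinh_def exp_minus field_simps)
  have c: "complex_of_real (cos t) = (z + inverse z) / 2"
    by (simp add: z_def complex_eq_iff cis.code)
  have sn_z: "complex_of_real (sin t) = (z - inverse z) / (2 * \<i>)"
    by (simp add: z_def complex_eq_iff cis.code)
  have sn: "complex_of_real (sin t) = - \<i> * (z * z - 1) / (2 * z)"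
    unfolding sn_z using z0 by (simp add: field_simps)
  have cz: "Complex (cos t) (- sin t) = inverse z"
    by (simp add: z_def cis_inverse complex_eq_iff)
  define p where "p = e - z"
  define q where "q = e * z - 1"
  define r where "r = e * e - 1"
  have nz: "p \<noteq> 0" "q \<noteq> 0" "r \<noteq> 0" using e_z ez ee by (auto simp: p_def q_def r_def)
  have d: "complex_of_real (cosh s - cos t) = p * q / (2 * e * z)"
    using e0 z0 by (simp add: ch c p_def q_def field_simps)
  note rational = dressing_parameter_rational[OF e0 z0 e_z ez ee,
      folded \<mu>, folded p_def q_def r_def]
  show "(\<mu> + inverse \<mu>) / 2 - 1 = - of_real (sinh s ^ 2 / (cosh s - cos t)) * Complex (cos t) (- sin t)"
    unfolding rational(1) of_real_divide of_real_power sh d cz r_def[symmetric]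
    using e0 z0 nz by (simp add: field_simps) (simp add: power2_eq_square algebra_simps)
  show "\<i> * ((inverse \<mu> - \<mu>) / 2) / ((\<mu> + inverse \<mu>) / 2 - 1)
      = Complex (sin t / sinh s) ((cosh s - cos t) / sinh s)"
    unfolding rational(2) Complex_eq of_real_divide sn sh d r_def[symmetric]
    using e0 z0 nz by (simp add: field_simps) (simp add: p_def q_def algebra_simps)
qed

lemma dressing_identity:
  fixes p q :: quat and ch sh c sn :: real
  assumes hyp: "ch\<^sup>2 = 1 + sh\<^sup>2" and trig: "sn\<^sup>2 = 1 - c\<^sup>2" and "sh \<noteq> 0" "ch \<noteq> c"
  defines "A \<equiv> - of_real (sh\<^sup>2 / (ch - c)) * Complex c (- sn)"
    and "C \<equiv> Complex (sn / sh) ((ch - c) / sh)"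
  shows "- qmul p ((1/2) *\<^sub>R ck A) + qmul q ((1/2) *\<^sub>R ck (C * A))
      - qmul (ck C) (qmul p ((1/2) *\<^sub>R ck (C * A)) + qmul q ((1/2) *\<^sub>R ck A))
    = Quat (p$0) (c * (p$1 * ch - q$2 * sh) - sn * (p$2 * ch + q$1 * sh))
        (sn * (p$1 * ch - q$2 * sh) + c * (p$2 * ch + q$1 * sh)) (p$3)"
proof -
  define d where "d = ch - c"
  have "d \<noteq> 0" using \<open>ch \<noteq> c\<close> by (simp add: d_def)
  show ?thesis
    unfolding quat_eq_iff A_def C_def d_def[symmetric] using \<open>sh \<noteq> 0\<close> \<open>d \<noteq> 0\<close>
    by (simp add: qmul_def ck_def field_simps) (intro conjI; use hyp trig d_def in algebra)
qed

lemma simple_factor_dressing_eq_ck: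
  defines "m \<equiv> Quat (1/2) (-1/2) (-1/2) (-1/2)"
  assumes "(\<mu> + inverse \<mu>) / 2 - 1 \<noteq> 0"
  shows "simple_factor_dressing \<mu> m m f fs z =
    (let A = (\<mu> + inverse \<mu>) / 2 - 1; C = \<i> * ((inverse \<mu> - \<mu>) / 2) / A in
     - qmul (f z) ((1/2) *\<^sub>R ck A) + qmul (fs z) ((1/2) *\<^sub>R ck (C * A))
     - qmul (ck C) (qmul (f z) ((1/2) *\<^sub>R ck (C * A)) + qmul (fs z) ((1/2) *\<^sub>R ck A)))"
proof -
  define A where "A = (\<mu> + inverse \<mu>) / 2 - 1"
  define B where "B = \<i> * ((inverse \<mu> - \<mu>) / 2)"
  have a: "cq ((\<mu> + inverse \<mu>) / 2) - qone = cq A"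
    by (simp add: A_def cq_def qone_def quat_eq_iff)
  have b: "qmul (cq \<i>) (cq ((inverse \<mu> - \<mu>) / 2)) = cq B"
    by (simp add: B_def cq_mult)
  have ba: "qmul (cq B) (qinv (cq A)) = cq (B / A)"
    by (simp add: qinv_cq cq_mult divide_inverse)
  have "B / A * A = B" using assms(2) by (simp add: A_def)
  then show ?thesis
    unfolding simple_factor_dressing_def Let_def a b ba m_def qconjby_cq
      A_def[symmetric] B_def[symmetric]
    by simp
qed

lemma simple_factor_dressing_eq_lopez_ros_map:
  fixes s t :: real
  assumes "s \<noteq> 0"
  defines "\<mu> \<equiv> (1 - exp (- Complex s t)) / (1 - exp (Complex s (- t)))"
    and "m \<equiv> Quat (1/2) (-1/2) (-1/2) (-1/2)"
  shows "simple_factor_dressing \<mu> m m f fs z = lopez_ros_map (Complex s t) (f z) (fs z)"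
proof -
  note param = lopez_ros_mu_closed_form[OF \<open>s \<noteq> 0\<close>, of t, folded \<mu>_def]
  have "sinh s \<noteq> 0" using \<open>s \<noteq> 0\<close> by simp
  moreover have "cosh s \<noteq> cos t"
    using cosh_real_ge_1[of s] cosh_real_one_iff[of s] cos_le_one[of t] \<open>s \<noteq> 0\<close> by linarith
  moreover have "cis t \<noteq> 0" by simp
  ultimately have A0: "(\<mu> + inverse \<mu>) / 2 - 1 \<noteq> 0"
    unfolding param(3) by (simp add: complex_eq_iff)
  show ?thesis
    unfolding m_def simple_factor_dressing_eq_ck[OF A0] Let_def param(4) lopez_ros_map_Complex
    unfolding param(3)
    using \<open>sinh s \<noteq> 0\<close> \<open>cosh s \<noteq> cos t\<close>
    by (intro dressing_identity) (simp_all add: cosh_square_eq sin_squared_eq)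
qed

theorem mainTheorem14:
  fixes U :: "complex set" and f fs F :: "complex \<Rightarrow> quat" and s t :: real
  assumes "open U" and "connected U"
    and "minimal_surface_on U f"
    and "conjugate_surface_on U f fs"
    and "\<exists>z\<in>U. W_omega f fs z \<noteq> 0"
    and "lopez_ros_deformation U f fs (exp (Complex s t)) F"
  shows "(\<exists>c. \<forall>z\<in>U. F z = Quat
            (f z $ 0)
            (cos t * (f z $ 1 * cosh s - fs z $ 2 * sinh s)
               - sin t * (f z $ 2 * cosh s + fs z $ 1 * sinh s))
            (sin t * (f z $ 1 * cosh s - fs z $ 2 * sinh s)
               + cos t * (f z $ 2 * cosh s + fs z $ 1 * sinh s))
            (f z $ 3) + c)
       \<and> (cmod (exp (Complex s t)) \<noteq> 1 \<longrightarrow>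
            (let \<mu> = (1 - exp (- Complex s t)) / (1 - exp (Complex s (- t)));
                 m = Quat (1/2) (-1/2) (-1/2) (-1/2) in
             \<mu> \<noteq> 0 \<and> \<mu> \<noteq> 1 \<and>
             (\<exists>c. \<forall>z\<in>U. F z = simple_factor_dressing \<mu> m m f fs z + c)))"
proof -
  obtain c where "\<forall>z\<in>U. F z = lopez_ros_map (Complex s t) (f z) (fs z) + c"
    using lopez_ros_deformation_eq_map[OF assms] by blast
  moreover have "s \<noteq> 0" if "cmod (exp (Complex s t)) \<noteq> 1"
    using that by auto
  ultimately show ?thesis
    unfolding Let_def lopez_ros_map_Complex[symmetric]
    using lopez_ros_mu_closed_form(1,2) simple_factor_dressing_eq_lopez_ros_map by metis
qed

end
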